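(* ${\bf K^\boxdot}$ is sound and strongly complete with respect to the class of all bimodal frames: for every $\Gamma\subseteq\mathcal{L}(\boxdot)$ and $\phi\in\mathcal{L}(\boxdot)$, $\Gamma\vdash_{{\bf K^\boxdot}}\phi$ iff $\phi$ is true at every state of every bimodal model at which all formulas of $\Gamma$ are true.
   Context: Fix a nonempty set $\mathbf{P}$ of propositional variables. A bimodal model is $\langle S,R_1,R_2,V\rangle$ with $S$ nonempty, $R_1,R_2\subseteq S\times S$, $V:\mathbf{P}\to\mathcal{P}(S)$. $\mathcal{L}(\boxdot):\ \phi::=p\mid\neg\phi\mid(\phi\wedge\phi)\mid\boxdot\phi$ (other connectives, $\top,\bot$ abbreviations). Truth: $\mathcal{M},s\vDash\boxdot\phi$ iff for all $t,u$ with $sR_1t$ and $sR_2u$, ($\mathcal{M},t\vDash\phi\iff\mathcal{M},u\vDash\phi$); atoms and Booleans as usual. ${\bf K^\boxdot}$ has axioms: all instances of propositional tautologies; $\boxdot\top$; $\boxdot\phi\leftrightarrow\boxdot\neg\phi$; $\boxdot\phi\wedge\boxdot\psi\to\boxdot(\phi\wedge\psi)$; $\boxdot\phi\to\boxdot(\phi\vee\psi)\vee\boxdot(\neg\phi\vee\chi)$; and rules: modus ponens and RE: from $\phi\leftrightarrow\psi$ infer $\boxdot\phi\leftrightarrow\boxdot\psi$. *)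

theory Defs
  imports Main
begin

text \<open>Formulas of L(boxdot) over propositional variables of type 'p
  (the type 'p plays the role of the nonempty set P).\<close>
datatype 'p fm = Atom 'p | Neg "'p fm" | Conj "'p fm" "'p fm" | Dot "'p fm"

definition Disj :: "'p fm \<Rightarrow> 'p fm \<Rightarrow> 'p fm" where
  "Disj a b = Neg (Conj (Neg a) (Neg b))"
definition Imp :: "'p fm \<Rightarrow> 'p fm \<Rightarrow> 'p fm" where
  "Imp a b = Neg (Conj a (Neg b))"
definition Iff :: "'p fm \<Rightarrow> 'p fm \<Rightarrow> 'p fm" where
  "Iff a b = Conj (Imp a b) (Imp b a)"
definition Bot :: "'p fm" where
  "Bot = Conj (Atom undefined) (Neg (Atom undefined))"
definition Top :: "'p fm" where
  "Top = Neg Bot"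

text \<open>Propositional tautologies: true under every Boolean valuation that treats
  atoms and boxdot-formulas as propositional letters.\<close>
fun peval :: "('p fm \<Rightarrow> bool) \<Rightarrow> 'p fm \<Rightarrow> bool" where
  "peval v (Atom p) = v (Atom p)"
| "peval v (Neg a) = (\<not> peval v a)"
| "peval v (Conj a b) = (peval v a \<and> peval v b)"
| "peval v (Dot a) = v (Dot a)"

definition taut :: "'p fm \<Rightarrow> bool" where
  "taut \<phi> \<longleftrightarrow> (\<forall>v. peval v \<phi>)"

inductive Kthm :: "'p fm \<Rightarrow> bool" where
  Taut: "taut \<phi> \<Longrightarrow> Kthm \<phi>"
| DotTop: "Kthm (Dot Top)"
| DotNeg: "Kthm (Iff (Dot \<phi>) (Dot (Neg \<phi>)))"
| DotConj: "Kthm (Imp (Conj (Dot \<phi>) (Dot \<psi>)) (Dot (Conj \<phi> \<psi>)))"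
| DotDisj: "Kthm (Imp (Dot \<phi>) (Disj (Dot (Disj \<phi> \<psi>)) (Dot (Disj (Neg \<phi>) \<chi>))))"
| MP: "Kthm \<phi> \<Longrightarrow> Kthm (Imp \<phi> \<psi>) \<Longrightarrow> Kthm \<psi>"
| RE: "Kthm (Iff \<phi> \<psi>) \<Longrightarrow> Kthm (Iff (Dot \<phi>) (Dot \<psi>))"

fun conjs :: "'p fm list \<Rightarrow> 'p fm" where
  "conjs [] = Top"
| "conjs (a # as) = Conj a (conjs as)"

definition derives :: "'p fm set \<Rightarrow> 'p fm \<Rightarrow> bool" where
  "derives \<Gamma> \<phi> \<longleftrightarrow> (\<exists>ps. set ps \<subseteq> \<Gamma> \<and> Kthm (Imp (conjs ps) \<phi>))"

text \<open>Bimodal models: state set = the (nonempty) type 's, two relations R1 R2,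
  valuation V.\<close>
fun sat :: "('s \<Rightarrow> 's \<Rightarrow> bool) \<Rightarrow> ('s \<Rightarrow> 's \<Rightarrow> bool) \<Rightarrow> ('p \<Rightarrow> 's set) \<Rightarrow> 's \<Rightarrow> 'p fm \<Rightarrow> bool" where
  "sat R1 R2 V s (Atom p) = (s \<in> V p)"
| "sat R1 R2 V s (Neg a) = (\<not> sat R1 R2 V s a)"
| "sat R1 R2 V s (Conj a b) = (sat R1 R2 V s a \<and> sat R1 R2 V s b)"
| "sat R1 R2 V s (Dot a) =
     (\<forall>t u. R1 s t \<longrightarrow> R2 s u \<longrightarrow> (sat R1 R2 V t a \<longleftrightarrow> sat R1 R2 V u a))"

definition consequence :: "'s itself \<Rightarrow> 'p fm set \<Rightarrow> 'p fm \<Rightarrow> bool" where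
  "consequence _ \<Gamma> \<phi> \<longleftrightarrow>
     (\<forall>(R1 :: 's \<Rightarrow> 's \<Rightarrow> bool) R2 V s. (\<forall>\<psi>\<in>\<Gamma>. sat R1 R2 V s \<psi>) \<longrightarrow> sat R1 R2 V s \<phi>)"

end

theory Submission
  imports Defs "HOL.Zorn"
begin

text \<open>Completeness uses a canonical
  model whose states are the maximal consistent sets, with both relations equal to
  \<open>R G D \<longleftrightarrow> N G \<subseteq> D\<close>, where \<open>N G = {\<phi>. \<forall>\<psi>. \<boxdot>(\<phi> \<or> \<psi>) \<in> G}\<close> collects the formulas
  that must hold at every successor of \<open>G\<close>. The key fact is
  \<open>\<boxdot>\<phi> \<in> G \<longleftrightarrow> \<phi> \<in> N G \<or> \<not>\<phi> \<in> N G\<close>: the axiom \<open>\<boxdot>\<phi> \<rightarrow> \<boxdot>(\<phi> \<or> \<psi>) \<or> \<boxdot>(\<not>\<phi> \<or> \<chi>)\<close> gives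
  the forward direction, and when neither \<open>\<phi>\<close> nor \<open>\<not>\<phi>\<close> lies in \<open>N G\<close>, Lindenbaum's
  lemma yields two successors disagreeing on \<open>\<phi>\<close>, which is exactly the truth condition
  of \<open>\<boxdot>\<close> failing.\<close>

lemma peval_derived_connectives [simp]:
  "peval v (Imp a b) = (peval v a \<longrightarrow> peval v b)"
  "peval v (Iff a b) = (peval v a \<longleftrightarrow> peval v b)"
  "peval v (Disj a b) = (peval v a \<or> peval v b)"
  "peval v Bot = False"
  "peval v Top = True"
  by (auto simp: Imp_def Iff_def Disj_def Bot_def Top_def)

lemma peval_conjs [simp]: "peval v (conjs ps) = (\<forall>a\<in>set ps. peval v a)"
  by (induct ps) auto

lemma Kthm_tautI: "(\<And>v. peval v \<phi>) \<Longrightarrow> Kthm \<phi>"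
  by (rule Taut) (auto simp: taut_def)

lemma Kthm_taut_mono: "Kthm a \<Longrightarrow> (\<And>v. peval v a \<Longrightarrow> peval v b) \<Longrightarrow> Kthm b"
  by (rule MP[of a]) (auto intro: Kthm_tautI)

lemma Kthm_taut_mono2:
  assumes a: "Kthm a" and b: "Kthm b" and ab: "\<And>v. peval v a \<Longrightarrow> peval v b \<Longrightarrow> peval v c"
  shows "Kthm c"
proof -
  have "Kthm (Imp b c)"
    using a by (rule Kthm_taut_mono) (simp add: ab)
  with b show ?thesis by (rule MP)
qed

section \<open>Soundness\<close>

lemma sat_derived_connectives [simp]:
  "sat R1 R2 V s (Imp a b) = (sat R1 R2 V s a \<longrightarrow> sat R1 R2 V s b)"
  "sat R1 R2 V s (Iff a b) = (sat R1 R2 V s a \<longleftrightarrow> sat R1 R2 V s b)"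
  "sat R1 R2 V s (Disj a b) = (sat R1 R2 V s a \<or> sat R1 R2 V s b)"
  "sat R1 R2 V s Bot = False"
  "sat R1 R2 V s Top = True"
  by (auto simp: Imp_def Iff_def Disj_def Bot_def Top_def)

lemma sat_conjs [simp]: "sat R1 R2 V s (conjs ps) = (\<forall>a\<in>set ps. sat R1 R2 V s a)"
  by (induct ps) auto

lemma sat_eq_peval: "sat R1 R2 V s \<phi> = peval (sat R1 R2 V s) \<phi>"
  by (induct \<phi>) auto

lemma Kthm_sound: "Kthm \<phi> \<Longrightarrow> sat R1 R2 V s \<phi>"
proof (induct \<phi> arbitrary: s rule: Kthm.induct)
  case (Taut \<phi>)
  then show ?case by (simp add: taut_def sat_eq_peval)
next
  case (DotDisj \<phi> \<psi> \<chi>)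
  then show ?case by simp blast
qed auto

lemma derives_sound: "derives \<Gamma> \<phi> \<Longrightarrow> consequence TYPE('s) \<Gamma> \<phi>"
  unfolding derives_def consequence_def
  using Kthm_sound by fastforce

section \<open>Maximal consistent sets\<close>

definition consistent :: "'p fm set \<Rightarrow> bool" where
  "consistent S \<longleftrightarrow> \<not> derives S Bot"

definition maximal_consistent :: "'p fm set \<Rightarrow> bool" where
  "maximal_consistent S \<longleftrightarrow> consistent S \<and> (\<forall>\<phi>. consistent (insert \<phi> S) \<longrightarrow> \<phi> \<in> S)"

lemma inconsistent_insertE:
  assumes "\<not> consistent (insert a S)"
  obtains qs where "set qs \<subseteq> S" "Kthm (Imp (conjs qs) (Neg a))"
proof -
  from assms obtain ps where ps: "set ps \<subseteq> insert a S" "Kthm (Imp (conjs ps) Bot)"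
    by (auto simp: consistent_def derives_def)
  let ?qs = "filter (\<lambda>x. x \<noteq> a) ps"
  have "Kthm (Imp (conjs ?qs) (Neg a))"
    using ps(2) by (rule Kthm_taut_mono) auto
  moreover have "set ?qs \<subseteq> S" using ps(1) by auto
  ultimately show ?thesis using that by blast
qed

lemma not_derives_imp_consistent:
  assumes "\<not> derives \<Gamma> \<phi>"
  shows "consistent (insert (Neg \<phi>) \<Gamma>)"
proof (rule ccontr)
  assume "\<not> consistent (insert (Neg \<phi>) \<Gamma>)"
  then obtain qs where qs: "set qs \<subseteq> \<Gamma>" "Kthm (Imp (conjs qs) (Neg (Neg \<phi>)))"
    by (rule inconsistent_insertE)
  have "Kthm (Imp (conjs qs) \<phi>)" using qs(2) by (rule Kthm_taut_mono) simp
  with qs(1) assms show False by (auto simp: derives_def)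
qed

lemma maximal_consistent_closed:
  assumes M: "maximal_consistent M" and ps: "set ps \<subseteq> M" and k: "Kthm (Imp (conjs ps) \<phi>)"
  shows "\<phi> \<in> M"
proof (rule ccontr)
  assume "\<phi> \<notin> M"
  with M have "\<not> consistent (insert \<phi> M)" by (auto simp: maximal_consistent_def)
  then obtain qs where qs: "set qs \<subseteq> M" "Kthm (Imp (conjs qs) (Neg \<phi>))"
    by (rule inconsistent_insertE)
  have "Kthm (Imp (conjs (ps @ qs)) Bot)" using k qs(2) by (rule Kthm_taut_mono2) auto
  with ps qs(1) have "derives M Bot" unfolding derives_def by (metis set_append le_sup_iff)
  with M show False by (simp add: maximal_consistent_def consistent_def)
qed

lemma maximal_consistent_Kthm:
  assumes M: "maximal_consistent M" and k: "Kthm \<phi>"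
  shows "\<phi> \<in> M"
proof (rule maximal_consistent_closed[OF M, of "[]"])
  show "Kthm (Imp (conjs []) \<phi>)" using k by (rule Kthm_taut_mono) simp
qed simp

lemma maximal_consistent_mp:
  assumes M: "maximal_consistent M" and "a \<in> M" and k: "Kthm (Imp a b)"
  shows "b \<in> M"
proof (rule maximal_consistent_closed[OF M, of "[a]"])
  show "Kthm (Imp (conjs [a]) b)" using k by (rule Kthm_taut_mono) simp
qed (simp add: \<open>a \<in> M\<close>)

lemma maximal_consistent_mp2:
  assumes M: "maximal_consistent M" and "a \<in> M" "b \<in> M" and k: "Kthm (Imp a (Imp b c))"
  shows "c \<in> M"
proof (rule maximal_consistent_closed[OF M, of "[a, b]"])
  show "Kthm (Imp (conjs [a, b]) c)" using k by (rule Kthm_taut_mono) simp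
qed (simp add: \<open>a \<in> M\<close> \<open>b \<in> M\<close>)

lemma maximal_consistent_Neg:
  assumes M: "maximal_consistent M"
  shows "Neg a \<in> M \<longleftrightarrow> a \<notin> M"
proof
  assume "Neg a \<in> M"
  show "a \<notin> M"
  proof
    assume "a \<in> M"
    moreover have "Kthm (Imp (conjs [a, Neg a]) Bot)" by (rule Kthm_tautI) simp
    ultimately have "derives M Bot"
      using \<open>Neg a \<in> M\<close> unfolding derives_def by (intro exI[of _ "[a, Neg a]"]) auto
    with M show False by (simp add: maximal_consistent_def consistent_def)
  qed
next
  assume "a \<notin> M"
  with M have "\<not> consistent (insert a M)" by (auto simp: maximal_consistent_def)
  then obtain qs where "set qs \<subseteq> M" "Kthm (Imp (conjs qs) (Neg a))"
    by (rule inconsistent_insertE)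
  with M show "Neg a \<in> M" by (rule maximal_consistent_closed)
qed

lemma maximal_consistent_Conj:
  assumes M: "maximal_consistent M"
  shows "Conj a b \<in> M \<longleftrightarrow> a \<in> M \<and> b \<in> M"
proof -
  have "Kthm (Imp (Conj a b) a)" "Kthm (Imp (Conj a b) b)" "Kthm (Imp a (Imp b (Conj a b)))"
    by (rule Kthm_tautI, simp)+
  then show ?thesis
    using maximal_consistent_mp[OF M] maximal_consistent_mp2[OF M] by blast
qed

lemma maximal_consistent_Dot_cong:
  assumes M: "maximal_consistent M" and "Kthm (Iff a b)" and "Dot a \<in> M"
  shows "Dot b \<in> M"
proof -
  have "Kthm (Imp (Dot a) (Dot b))" using RE[OF \<open>Kthm (Iff a b)\<close>] by (rule Kthm_taut_mono) simp
  with M \<open>Dot a \<in> M\<close> show ?thesis by (rule maximal_consistent_mp)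
qed

lemma consistent_Union_chain:
  assumes "C \<noteq> {}" "subset.chain {T. consistent T} C"
  shows "consistent (\<Union>C)"
  unfolding consistent_def derives_def
proof (rule notI, elim exE conjE)
  fix ps assume ps: "set ps \<subseteq> \<Union>C" "Kthm (Imp (conjs ps) Bot)"
  obtain B where "B \<in> C" "set ps \<subseteq> B"
    using finite_subset_Union_chain[OF _ ps(1) assms] by blast
  moreover have "consistent B" using assms(2) \<open>B \<in> C\<close> by (auto simp: subset.chain_def)
  ultimately show False using ps(2) by (auto simp: consistent_def derives_def)
qed

lemma lindenbaum:
  assumes "consistent S"
  obtains M where "S \<subseteq> M" "maximal_consistent M"
proof -
  let ?A = "{T. S \<subseteq> T \<and> consistent T}"
  have "\<exists>M\<in>?A. \<forall>X\<in>?A. M \<subseteq> X \<longrightarrow> X = M"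
  proof (rule subset_Zorn_nonempty)
    fix C assume C: "C \<noteq> {}" "subset.chain ?A C"
    have "subset.chain {T. consistent T} C" using C(2) by (auto simp: subset.chain_def)
    with C(1) have "consistent (\<Union>C)" by (rule consistent_Union_chain)
    moreover have "S \<subseteq> \<Union>C" using C unfolding subset.chain_def by blast
    ultimately show "\<Union>C \<in> ?A" by simp
  qed (use assms in auto)
  then obtain M where M: "M \<in> ?A" "\<forall>X\<in>?A. M \<subseteq> X \<longrightarrow> X = M" by blast
  then have "maximal_consistent M"
    unfolding maximal_consistent_def by blast
  with M(1) show thesis by (intro that) auto
qed

section \<open>The canonical model\<close>

definition necessities :: "'p fm set \<Rightarrow> 'p fm set" where
  "necessities G = {\<phi>. \<forall>\<psi>. Dot (Disj \<phi> \<psi>) \<in> G}"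

definition canonical_rel :: "'p fm set \<Rightarrow> 'p fm set \<Rightarrow> bool" where
  "canonical_rel G D \<longleftrightarrow> maximal_consistent D \<and> necessities G \<subseteq> D"

definition canonical_val :: "'p \<Rightarrow> 'p fm set set" where
  "canonical_val p = {G. Atom p \<in> G}"

lemma Top_in_necessities:
  assumes G: "maximal_consistent G"
  shows "Top \<in> necessities G"
proof -
  have "Dot (Disj Top \<psi>) \<in> G" for \<psi>
    by (rule maximal_consistent_Dot_cong[OF G _ maximal_consistent_Kthm[OF G DotTop]])
      (rule Kthm_tautI, simp)
  then show ?thesis by (simp add: necessities_def)
qed

lemma Conj_in_necessities:
  assumes G: "maximal_consistent G" and "a \<in> necessities G" "b \<in> necessities G"
  shows "Conj a b \<in> necessities G"
  unfolding necessities_def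
proof (intro CollectI allI)
  fix \<psi>
  have "Dot (Disj a \<psi>) \<in> G" "Dot (Disj b \<psi>) \<in> G"
    using assms(2,3) by (auto simp: necessities_def)
  moreover have "Kthm (Imp (Dot (Disj a \<psi>)) (Imp (Dot (Disj b \<psi>)) (Dot (Conj (Disj a \<psi>) (Disj b \<psi>)))))"
    using DotConj[of "Disj a \<psi>" "Disj b \<psi>"] by (rule Kthm_taut_mono) simp
  ultimately have "Dot (Conj (Disj a \<psi>) (Disj b \<psi>)) \<in> G"
    by (rule maximal_consistent_mp2[OF G])
  then show "Dot (Disj (Conj a b) \<psi>) \<in> G"
    by (rule maximal_consistent_Dot_cong[OF G, rotated]) (rule Kthm_tautI, auto)
qed

lemma conjs_in_necessities:
  "maximal_consistent G \<Longrightarrow> set ps \<subseteq> necessities G \<Longrightarrow> conjs ps \<in> necessities G"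
proof (induct ps)
  case Nil
  then show ?case by (simp add: Top_in_necessities)
next
  case (Cons a ps)
  then show ?case by (simp add: Conj_in_necessities)
qed

lemma necessities_mono:
  assumes G: "maximal_consistent G" and "a \<in> necessities G" and k: "Kthm (Imp a \<phi>)"
  shows "\<phi> \<in> necessities G"
  unfolding necessities_def
proof (intro CollectI allI)
  fix \<psi>
  have "Dot (Disj a (Disj \<phi> \<psi>)) \<in> G" using assms(2) by (auto simp: necessities_def)
  then show "Dot (Disj \<phi> \<psi>) \<in> G"
    by (rule maximal_consistent_Dot_cong[OF G, rotated]) (rule Kthm_taut_mono[OF k], auto)
qed

lemma consistent_insert_necessities:
  assumes G: "maximal_consistent G" and "Neg a \<notin> necessities G"
  shows "consistent (insert a (necessities G))"
proof (rule ccontr)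
  assume "\<not> consistent (insert a (necessities G))"
  then obtain qs where "set qs \<subseteq> necessities G" "Kthm (Imp (conjs qs) (Neg a))"
    by (rule inconsistent_insertE)
  then have "Neg a \<in> necessities G"
    using necessities_mono[OF G conjs_in_necessities[OF G]] by blast
  with assms(2) show False ..
qed

lemma necessity_imp_Dot:
  assumes G: "maximal_consistent G" and "\<phi> \<in> necessities G"
  shows "Dot \<phi> \<in> G"
proof -
  have "Dot (Disj \<phi> \<phi>) \<in> G" using assms(2) by (auto simp: necessities_def)
  then show ?thesis by (rule maximal_consistent_Dot_cong[OF G, rotated]) (rule Kthm_tautI, auto)
qed

lemma Dot_in_maximal_consistent_iff:
  assumes G: "maximal_consistent G"
  shows "Dot \<phi> \<in> G \<longleftrightarrow> \<phi> \<in> necessities G \<or> Neg \<phi> \<in> necessities G"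
proof
  assume d: "Dot \<phi> \<in> G"
  show "\<phi> \<in> necessities G \<or> Neg \<phi> \<in> necessities G"
  proof (cases "\<phi> \<in> necessities G")
    case False
    then obtain \<psi> where \<psi>: "Dot (Disj \<phi> \<psi>) \<notin> G" by (auto simp: necessities_def)
    have "Dot (Disj (Neg \<phi>) \<chi>) \<in> G" for \<chi>
    proof -
      have "Disj (Dot (Disj \<phi> \<psi>)) (Dot (Disj (Neg \<phi>) \<chi>)) \<in> G"
        by (rule maximal_consistent_mp[OF G d DotDisj])
      with \<psi> show ?thesis
        unfolding Disj_def[of "Dot _"] maximal_consistent_Neg[OF G] maximal_consistent_Conj[OF G]
        by blast
    qed
    then show ?thesis by (simp add: necessities_def)
  qed simp
next
  assume "\<phi> \<in> necessities G \<or> Neg \<phi> \<in> necessities G"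
  then show "Dot \<phi> \<in> G"
  proof
    assume "\<phi> \<in> necessities G"
    then show ?thesis by (rule necessity_imp_Dot[OF G])
  next
    assume "Neg \<phi> \<in> necessities G"
    then have "Dot (Neg \<phi>) \<in> G" by (rule necessity_imp_Dot[OF G])
    then show ?thesis
      by (rule maximal_consistent_mp[OF G]) (rule Kthm_taut_mono[OF DotNeg[of \<phi>]], auto)
  qed
qed

lemma canonical_successors_disagree:
  assumes G: "maximal_consistent G" and "Dot \<phi> \<notin> G"
  obtains D1 D2 where "canonical_rel G D1" "canonical_rel G D2" "\<phi> \<in> D1" "\<phi> \<notin> D2"
proof -
  have n: "\<phi> \<notin> necessities G" "Neg \<phi> \<notin> necessities G"
    using assms Dot_in_maximal_consistent_iff by blast+
  have "Neg (Neg \<phi>) \<notin> necessities G"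
    using necessities_mono[OF G _ Kthm_tautI[of "Imp (Neg (Neg \<phi>)) \<phi>"]] n(1) by auto
  then obtain D2 where D2: "insert (Neg \<phi>) (necessities G) \<subseteq> D2" "maximal_consistent D2"
    using lindenbaum[OF consistent_insert_necessities[OF G]] by blast
  obtain D1 where D1: "insert \<phi> (necessities G) \<subseteq> D1" "maximal_consistent D1"
    using lindenbaum[OF consistent_insert_necessities[OF G n(2)]] by blast
  have "canonical_rel G D1" "canonical_rel G D2"
    using D1 D2 by (auto simp: canonical_rel_def)
  moreover have "\<phi> \<in> D1" "\<phi> \<notin> D2"
    using D1(1) D2 maximal_consistent_Neg[OF D2(2)] by auto
  ultimately show thesis by (rule that)
qed

lemma truth_lemma:
  "maximal_consistent G \<Longrightarrow> sat canonical_rel canonical_rel canonical_val G \<phi> \<longleftrightarrow> \<phi> \<in> G"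
proof (induct \<phi> arbitrary: G)
  case (Atom p)
  then show ?case by (simp add: canonical_val_def)
next
  case (Neg \<phi>)
  then show ?case by (simp add: maximal_consistent_Neg)
next
  case (Conj \<phi> \<psi>)
  then show ?case by (simp add: maximal_consistent_Conj)
next
  case (Dot \<phi>)
  note G = \<open>maximal_consistent G\<close>
  have IH: "canonical_rel G D \<Longrightarrow> sat canonical_rel canonical_rel canonical_val D \<phi> \<longleftrightarrow> \<phi> \<in> D" for D
    by (rule Dot.hyps) (simp add: canonical_rel_def)
  show ?case
  proof
    assume s: "sat canonical_rel canonical_rel canonical_val G (Dot \<phi>)"
    show "Dot \<phi> \<in> G"
    proof (rule ccontr)
      assume "Dot \<phi> \<notin> G"
      then obtain D1 D2 where D: "canonical_rel G D1" "canonical_rel G D2" "\<phi> \<in> D1" "\<phi> \<notin> D2"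
        by (rule canonical_successors_disagree[OF G])
      have "sat canonical_rel canonical_rel canonical_val D1 \<phi>
          \<longleftrightarrow> sat canonical_rel canonical_rel canonical_val D2 \<phi>"
        by (rule s[unfolded sat.simps, rule_format, OF D(1,2)])
      then have "\<phi> \<in> D1 \<longleftrightarrow> \<phi> \<in> D2" by (simp only: IH[OF D(1)] IH[OF D(2)])
      with D(3,4) show False by blast
    qed
  next
    assume "Dot \<phi> \<in> G"
    then have nec: "\<phi> \<in> necessities G \<or> Neg \<phi> \<in> necessities G"
      using Dot_in_maximal_consistent_iff[OF G] by blast
    have agree: "\<phi> \<in> t \<longleftrightarrow> \<phi> \<in> u" if "canonical_rel G t" "canonical_rel G u" for t u
      using that nec maximal_consistent_Neg[of t \<phi>] maximal_consistent_Neg[of u \<phi>]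
      unfolding canonical_rel_def by blast
    show "sat canonical_rel canonical_rel canonical_val G (Dot \<phi>)"
      unfolding sat.simps
    proof (intro allI impI)
      fix t u assume t: "canonical_rel G t" and u: "canonical_rel G u"
      show "sat canonical_rel canonical_rel canonical_val t \<phi>
          \<longleftrightarrow> sat canonical_rel canonical_rel canonical_val u \<phi>"
        by (simp only: IH[OF t] IH[OF u] agree[OF t u])
    qed
  qed
qed

lemma derives_complete:
  fixes \<Gamma> :: "'p fm set"
  assumes "consequence TYPE('p fm set) \<Gamma> \<phi>"
  shows "derives \<Gamma> \<phi>"
proof (rule ccontr)
  assume "\<not> derives \<Gamma> \<phi>"
  then obtain M where M: "insert (Neg \<phi>) \<Gamma> \<subseteq> M" "maximal_consistent M"
    by (rule lindenbaum[OF not_derives_imp_consistent])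
  then have "\<forall>\<psi>\<in>\<Gamma>. sat canonical_rel canonical_rel canonical_val M \<psi>"
    using truth_lemma[OF M(2)] by blast
  then have "sat canonical_rel canonical_rel canonical_val M \<phi>"
    using assms unfolding consequence_def by blast
  then have "\<phi> \<in> M" using truth_lemma[OF M(2)] by blast
  moreover have "Neg \<phi> \<in> M" using M(1) by blast
  ultimately show False using maximal_consistent_Neg[OF M(2)] by blast
qed

theorem theorem7:
  fixes \<Gamma> :: "'p fm set" and \<phi> :: "'p fm"
  shows "(derives \<Gamma> \<phi> \<longrightarrow> consequence TYPE('s) \<Gamma> \<phi>)
       \<and> (consequence TYPE('p fm set) \<Gamma> \<phi> \<longrightarrow> derives \<Gamma> \<phi>)"
  using derives_sound[of \<Gamma> \<phi>] derives_complete[of \<Gamma> \<phi>] by blast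

end
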